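(* For all $t\ge0$ and $x,y\in\mathbb R^d$, $$H^\nu_t(x,y)\le2(1+|y|)\hbar^\nu_t(x),$$ where $H^\nu_t(x,y):=\int_{B_\ell^c}\log\big(1+\frac{|z|}{1+|x-y|}\big)\nu_{t,x}(dz)$ and $\hbar^\nu_t(x):=\int_{B_\ell^c}\log\big(1+\frac{|z|}{1+|x|}\big)\nu_{t,x}(dz)$.
   Context: $d\ge1$, $\ell\in(0,1/\sqrt2)$, $B_\ell^c=\{z\in\mathbb R^d:|z|\ge\ell\}$, and $\{\nu_{t,x}\}_{t\ge0,x\in\mathbb R^d}$ is a family of (nonnegative) Lévy measures on $\mathbb R^d$. *)

theory Defs
  imports "HOL-Analysis.Analysis"
begin

definition levy_measure :: "'a::euclidean_space measure \<Rightarrow> bool" where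
  "levy_measure M \<longleftrightarrow> sets M = sets borel \<and> emeasure M {0} = 0 \<and>
     (\<integral>\<^sup>+ z. ennreal (min 1 ((norm z)\<^sup>2)) \<partial>M) < \<infinity>"

definition Bc :: "real \<Rightarrow> 'a::euclidean_space set" where
  "Bc l = {z. norm z \<ge> l}"

definition H_nu :: "(real \<Rightarrow> 'a::euclidean_space \<Rightarrow> 'a measure) \<Rightarrow> real \<Rightarrow> real \<Rightarrow> 'a \<Rightarrow> 'a \<Rightarrow> ennreal" where
  "H_nu \<nu> l t x y = (\<integral>\<^sup>+ z. ennreal (ln (1 + norm z / (1 + norm (x - y)))) * indicator (Bc l) z \<partial>(\<nu> t x))"

definition hbar_nu :: "(real \<Rightarrow> 'a::euclidean_space \<Rightarrow> 'a measure) \<Rightarrow> real \<Rightarrow> real \<Rightarrow> 'a \<Rightarrow> ennreal" where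
  "hbar_nu \<nu> l t x = (\<integral>\<^sup>+ z. ennreal (ln (1 + norm z / (1 + norm x))) * indicator (Bc l) z \<partial>(\<nu> t x))"

end

theory Submission
  imports Defs
begin

text \<open>Since \<open>1 + |x| \<le> (1 + |y|)(1 + |x - y|)\<close>, the integrand of \<open>H\<close> is at most
  \<open>ln (1 + c u)\<close> with \<open>c = 1 + |y|\<close> and \<open>u = |z| / (1 + |x|)\<close>; by concavity of the
  logarithm \<open>ln (1 + c u) \<le> c ln (1 + u)\<close> for \<open>c \<ge> 1\<close>, and integrating gives the bound even
  with constant 1 instead of 2.\<close>

lemma ratio_le_ln_one_plus:
  fixes u :: real
  assumes "u > -1"
  shows "u / (1 + u) \<le> ln (1 + u)"
proof -
  have pos: "1 + u > 0" using assms by simp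
  have "- ln (1 + u) = ln (1 / (1 + u))" using pos by (simp add: ln_div)
  also have "\<dots> \<le> 1 / (1 + u) - 1" using pos by (intro ln_le_minus_one) simp
  also have "\<dots> = - (u / (1 + u))" using pos by (simp add: field_simps)
  finally show ?thesis by simp
qed

lemma ln_one_plus_mult_le:
  fixes u c :: real
  assumes "u \<ge> 0" and "c \<ge> 1"
  shows "ln (1 + c * u) \<le> c * ln (1 + u)"
proof -
  have pos: "1 + u > 0" "1 + c * u > 0" using assms by (auto intro: add_pos_nonneg)
  have "ln (1 + c * u) - ln (1 + u) = ln ((1 + c * u) / (1 + u))" using pos by (simp add: ln_div)
  also have "\<dots> \<le> (1 + c * u) / (1 + u) - 1" using pos by (intro ln_le_minus_one) simp
  also have "\<dots> = (c - 1) * (u / (1 + u))" using pos by (simp add: field_simps)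
  also have "\<dots> \<le> (c - 1) * ln (1 + u)"
    using assms by (intro mult_left_mono ratio_le_ln_one_plus) simp_all
  finally show ?thesis by (simp add: algebra_simps)
qed

lemma one_plus_norm_le_mult:
  fixes x y :: "'a::real_normed_vector"
  shows "1 + norm x \<le> (1 + norm y) * (1 + norm (x - y))"
proof -
  have "norm x \<le> norm (x - y) + norm y" using norm_triangle_ineq[of "x - y" y] by simp
  moreover have "0 \<le> norm y * norm (x - y)" by simp
  ultimately show ?thesis by (simp add: algebra_simps del: mult_nonneg_nonneg)
qed

lemma ln_one_plus_div_shift_le:
  fixes x y :: "'a::real_normed_vector" and r :: real
  assumes "r \<ge> 0"
  shows "ln (1 + r / (1 + norm (x - y))) \<le> (1 + norm y) * ln (1 + r / (1 + norm x))"
proof -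
  define c where "c = 1 + norm y"
  have c: "c \<ge> 1" unfolding c_def by simp
  have "r / (1 + norm (x - y)) = c * r / (c * (1 + norm (x - y)))" using c by simp
  also have "\<dots> \<le> c * r / (1 + norm x)"
    using one_plus_norm_le_mult[of x y] assms c
    by (intro divide_left_mono) (auto simp: c_def intro!: mult_pos_pos add_pos_nonneg)
  finally have "ln (1 + r / (1 + norm (x - y))) \<le> ln (1 + c * (r / (1 + norm x)))"
    using assms by (intro ln_mono) (auto intro: add_pos_nonneg)
  also have "\<dots> \<le> c * ln (1 + r / (1 + norm x))"
    using assms c by (intro ln_one_plus_mult_le) simp_all
  finally show ?thesis unfolding c_def .
qed

lemma closed_Bc: "closed (Bc l :: 'a::euclidean_space set)"
  unfolding Bc_def by (simp add: closed_Collect_le continuous_on_const continuous_on_norm_id)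

lemma H_nu_le_hbar_nu:
  fixes \<nu> :: "real \<Rightarrow> 'a::euclidean_space \<Rightarrow> 'a measure"
  assumes "sets (\<nu> t x) = sets borel"
  shows "H_nu \<nu> l t x y \<le> ennreal (1 + norm y) * hbar_nu \<nu> l t x"
proof -
  let ?g = "\<lambda>z. ennreal (ln (1 + norm z / (1 + norm x))) * indicator (Bc l) z"
  have "?g \<in> borel_measurable (\<nu> t x)"
    unfolding measurable_cong_sets[OF assms refl]
    using borel_closed[OF closed_Bc] by measurable
  have "H_nu \<nu> l t x y \<le> (\<integral>\<^sup>+ z. ennreal (1 + norm y) * ?g z \<partial>\<nu> t x)"
    unfolding H_nu_def
  proof (intro nn_integral_mono)
    fix z :: 'a
    have "ennreal (ln (1 + norm z / (1 + norm (x - y))))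
        \<le> ennreal ((1 + norm y) * ln (1 + norm z / (1 + norm x)))"
      by (intro ennreal_leI ln_one_plus_div_shift_le) simp
    then show "ennreal (ln (1 + norm z / (1 + norm (x - y)))) * indicator (Bc l) z
        \<le> ennreal (1 + norm y) * ?g z"
      by (simp add: ennreal_mult indicator_def)
  qed
  also have "\<dots> = ennreal (1 + norm y) * hbar_nu \<nu> l t x"
    unfolding hbar_nu_def by (rule nn_integral_cmult) fact
  finally show ?thesis .
qed

theorem lemma3p5:
  fixes \<nu> :: "real \<Rightarrow> 'a::euclidean_space \<Rightarrow> 'a measure" and l :: real
  assumes "0 < l" and "l < 1 / sqrt 2"
    and "\<And>t x. t \<ge> 0 \<Longrightarrow> levy_measure (\<nu> t x)"
  shows "\<forall>t \<ge> 0. \<forall>x y :: 'a. H_nu \<nu> l t x y \<le> 2 * ennreal (1 + norm y) * hbar_nu \<nu> l t x"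
proof (intro allI impI)
  fix t :: real and x y :: 'a
  assume "t \<ge> 0"
  then have "sets (\<nu> t x) = sets borel" using assms(3) by (simp add: levy_measure_def)
  then have "H_nu \<nu> l t x y \<le> ennreal (1 + norm y) * hbar_nu \<nu> l t x"
    by (rule H_nu_le_hbar_nu)
  also have "\<dots> \<le> 2 * ennreal (1 + norm y) * hbar_nu \<nu> l t x"
    by (intro mult_right_mono) (simp_all only: mult_2 add_increasing2 zero_le order_refl)
  finally show "H_nu \<nu> l t x y \<le> 2 * ennreal (1 + norm y) * hbar_nu \<nu> l t x" .
qed

end
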